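(* Let $(H_n)_{n\ge0}$ be the monic Hermite polynomials ($H_0=1$, $H_{-1}=0$, $H_n=xH_{n-1}-\tfrac{n-1}{2}H_{n-2}$), with $H_n(x)=\sum_{i=0}^nb_{n,i}x^i$ (convention $b_{m,m}=1$, $b_{m,l}=0$ for $l>m$). For integers $n\ge k\ge1$ and $0\le t\le k-1$ let $E_{k,n,t}$ be the determinant of the $(k-t-1)\times(k-t-1)$ matrix with $(\rho,c)$ entry $b_{n-k+t+1+c,\;n-k+t+\rho}$ (with $E_{k,n,k-1}=1$). Then for integers $j\ge0$, $r\ge1$ with $j+r\le k$, $$E_{k,n,j+r-1}=\begin{cases}0,& k-j-r \text{ odd},\\[2pt] \dfrac{n!}{(n-k+j+r)!\,\left(\frac{k-j-r}{2}\right)!\,2^{k-j-r}},& k-j-r\text{ even}.\end{cases}$$ *)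

theory Defs
  imports "HOL-Computational_Algebra.Polynomial" "Jordan_Normal_Form.Determinant"
begin

fun hermite :: "nat \<Rightarrow> real poly" where
  "hermite 0 = 1"
| "hermite (Suc 0) = [:0, 1:]"
| "hermite (Suc (Suc m)) = [:0, 1:] * hermite (Suc m) - smult (real (Suc m) / 2) (hermite m)"

definition b :: "nat \<Rightarrow> nat \<Rightarrow> real" where
  "b m l = coeff (hermite m) l"

text \<open>E_(k,n,t): determinant of the (k-t-1)x(k-t-1) matrix with (rho,c) entry
  b_(n-k+t+1+c, n-k+t+rho), rho, c ranging over 1..k-t-1 (shifted to 0-based indices).\<close>
definition E :: "nat \<Rightarrow> nat \<Rightarrow> nat \<Rightarrow> real" where
  "E k n t = det (mat (k - t - 1) (k - t - 1)
      (\<lambda>(\<rho>, c). b (n - k + t + 1 + (c + 1)) (n - k + t + (\<rho> + 1))))"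

end

theory Submission
  imports Defs
begin

text \<open>
  Since sum_p H_p(x) t^p / p! = exp(x t - t^2/4), the Hermite coefficients are
  b_{p,q} = p!/q! g_{p-q}, where g_d is the coefficient of t^d in exp(-t^2/4). Scaling the
  rows and columns of the matrix defining E_{k,n,t} by factorials therefore leaves the
  Hessenberg Toeplitz matrix (g_{c+1-rho}), and the scalings telescope to n!/(n-k+t+1)!.
  Multiplying that matrix by the unitriangular Toeplitz matrix of the inverse series
  u = exp(t^2/4) leaves only the subdiagonal of ones and the first row (-u_{c+1}), so its
  determinant of size m is (-1)^m u_m: zero for odd m and 1/((m/2)! 2^m) for even m.
\<close>

text \<open>The coefficient of t^z in exp(c t^2); integer indices make negative ones give 0.\<close>

definition even_exp_coeff :: "real \<Rightarrow> int \<Rightarrow> real" where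
  "even_exp_coeff c z = (if 0 \<le> z \<and> even z then c ^ (nat z div 2) / fact (nat z div 2) else 0)"

lemma even_exp_coeff_0_right [simp]: "even_exp_coeff c 0 = 1"
  by (simp add: even_exp_coeff_def)

lemma even_exp_coeff_neg: "z < 0 \<Longrightarrow> even_exp_coeff c z = 0"
  by (simp add: even_exp_coeff_def)

lemma even_exp_coeff_double: "even_exp_coeff c (2 * int i) = c ^ i / fact i"
  by (simp add: even_exp_coeff_def nat_mult_distrib)

lemma even_exp_coeff_odd: "odd z \<Longrightarrow> even_exp_coeff c z = 0"
  by (simp add: even_exp_coeff_def)

lemma even_exp_coeff_quarter:
  "even_exp_coeff (1/4) (int m) = (if odd m then 0 else 1 / (fact (m div 2) * 2 ^ m))"
  by (auto simp: even_exp_coeff_def power_mult power_one_over elim!: evenE)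

lemma even_exp_coeff_rec: "real_of_int z * even_exp_coeff c z = 2 * c * even_exp_coeff c (z - 2)"
proof (cases "2 \<le> z \<and> even z")
  case True
  then obtain w where "z = 2 * w" and "1 \<le> w" by (auto elim: evenE)
  then obtain i where z: "z = 2 * int (Suc i)" by (intro that[of "nat (w - 1)"]) simp
  then have z2: "z - 2 = 2 * int i" by simp
  have "real_of_int z * even_exp_coeff c z = 2 * real (Suc i) * (c ^ Suc i / fact (Suc i))"
    unfolding z even_exp_coeff_double by simp
  also have "\<dots> = 2 * c * (c ^ i / fact i)"
    by (simp add: divide_simps del: of_nat_Suc)
  finally show ?thesis unfolding z2 even_exp_coeff_double .
next
  case False
  then have "z < 0 \<or> z = 0 \<or> odd z" by auto
  then show ?thesis by (auto simp: even_exp_coeff_def)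
qed

lemma even_exp_coeff_convolution:
  "(\<Sum>j\<le>p. even_exp_coeff c (int p - int j) * even_exp_coeff d (int j)) =
    even_exp_coeff (c + d) (int p)"
proof (cases "even p")
  case False
  have zero: "even_exp_coeff c (int p - int j) * even_exp_coeff d (int j) = 0" for j
    using False by (cases "even j") (auto simp: even_exp_coeff_odd)
  show ?thesis using False by (simp only: zero sum.neutral_const) (simp add: even_exp_coeff_odd)
next
  case True
  then obtain q where p: "p = 2 * q" by blast
  let ?f = "\<lambda>j. even_exp_coeff c (int p - int j) * even_exp_coeff d (int j)"
  have "(\<Sum>j\<le>p. ?f j) = (\<Sum>j\<le>Suc (2 * q). ?f j)"
    using p by (simp add: even_exp_coeff_neg)
  also have "\<dots> = (\<Sum>i\<le>q. ?f (2 * i) + ?f (Suc (2 * i)))"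
    by (rule sum.in_pairs_0)
  also have "\<dots> = (\<Sum>i\<le>q. of_nat (q choose i) * d ^ i * c ^ (q - i) / fact q)"
  proof (rule sum.cong[OF refl])
    fix i assume "i \<in> {..q}"
    then have i: "i \<le> q" by simp
    have "int p - int (2 * i) = int (2 * (q - i))" using i p by simp
    then have "?f (2 * i) = c ^ (q - i) / fact (q - i) * (d ^ i / fact i)"
      by (simp add: even_exp_coeff_double)
    moreover have "?f (Suc (2 * i)) = 0" by (simp add: even_exp_coeff_odd)
    ultimately show
      "?f (2 * i) + ?f (Suc (2 * i)) = of_nat (q choose i) * d ^ i * c ^ (q - i) / fact q"
      by (simp add: binomial_fact[OF i] field_simps)
  qed
  also have "\<dots> = (d + c) ^ q / fact q"
    by (simp add: binomial_ring sum_divide_distrib)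
  finally show ?thesis using p by (simp add: even_exp_coeff_double add.commute)
qed

lemma coeff_hermite:
  "coeff (hermite p) q = fact p / fact q * even_exp_coeff (-1/4) (int p - int q)"
proof (induction p arbitrary: q rule: hermite.induct)
  case 1
  show ?case by (cases q) (simp_all add: even_exp_coeff_neg)
next
  case 2
  show ?case
    by (cases q) (auto simp: coeff_pCons even_exp_coeff_neg even_exp_coeff_odd split: nat.split)
next
  case (3 m)
  let ?e = "even_exp_coeff (-1/4)"
  have coeff_rec: "coeff (hermite (Suc (Suc m))) q =
      (if q = 0 then 0 else coeff (hermite (Suc m)) (q - 1)) -
      real (Suc m) / 2 * coeff (hermite m) q"
    by (simp add: coeff_pCons split: nat.split)
  define z where "z = int (Suc (Suc m)) - int q"
  have "?e (z - 2) = - 2 * (real_of_int z * ?e z)"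
    using even_exp_coeff_rec[of z "-1/4"] by simp
  moreover have "z - 2 = int m - int q" by (simp add: z_def)
  ultimately have e_shift: "?e (int m - int q) = - 2 * (real_of_int z * ?e z)" by simp
  show ?case
  proof (cases q)
    case 0
    have "coeff (hermite (Suc (Suc m))) q = - real (Suc m) / 2 * fact m * ?e (int m - int q)"
      using coeff_rec 3(2)[of q] 0 by (simp add: algebra_simps)
    also have "\<dots> = fact (Suc (Suc m)) * ?e z"
      unfolding e_shift by (simp add: z_def 0 field_simps)
    finally show ?thesis by (simp add: z_def 0)
  next
    case (Suc q')
    then have z_Suc: "int (Suc m) - int q' = z" by (simp add: z_def)
    have "coeff (hermite (Suc (Suc m))) q =
        fact (Suc m) / fact q' * ?e z - real (Suc m) / 2 * (fact m / fact q * ?e (int m - int q))"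
      using coeff_rec 3(1)[of q', unfolded z_Suc] 3(2)[of q] Suc by simp
    also have "\<dots> = fact (Suc m) / fact q * (real q + real_of_int z) * ?e z"
    proof -
      have "fact q = real q * fact q'" and "real q \<noteq> 0" using Suc by simp_all
      then show ?thesis unfolding e_shift by (simp add: field_simps)
    qed
    also have "real q + real_of_int z = real (Suc (Suc m))"
      by (simp add: z_def)
    finally show ?thesis by (simp add: z_def)
  qed
qed

lemma det_mat_diag: "det (mat_diag n f) = (\<Prod>i<n. f i)"
  by (subst det_upper_triangular[of _ n])
    (auto simp: mat_diag_def upper_triangular_def prod_list_diag_prod atLeast0LessThan)

lemma det_mat_scaled:
  fixes A :: "'a::comm_ring_1 mat"
  assumes A: "A \<in> carrier_mat n n"
  shows "det (mat n n (\<lambda>(i, j). x i * A $$ (i, j) * y j)) =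
    (\<Prod>i<n. x i) * det A * (\<Prod>j<n. y j)"
proof -
  have "mat n n (\<lambda>(i, j). x i * A $$ (i, j) * y j) = mat_diag n x * A * mat_diag n y"
    unfolding mat_diag_mult_left[OF A] by (subst mat_diag_mult_right[of _ n n]) auto
  also have "det \<dots> = det (mat_diag n x) * det A * det (mat_diag n y)"
    using A by (simp add: det_mult[of _ n] mult_carrier_mat[of _ n n])
  finally show ?thesis by (simp add: det_mat_diag)
qed

lemma det_subdiagonal_first_row:
  fixes v :: "nat \<Rightarrow> 'a::comm_ring_1"
  shows "det (mat (Suc m) (Suc m)
      (\<lambda>(\<rho>, c). (if \<rho> = c + 1 then 1 else 0) - (if \<rho> = 0 then v c else 0))) =
    (-1) ^ Suc m * v m"
    (is "det ?C = _")
proof -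
  have C: "?C \<in> carrier_mat (Suc m) (Suc m)" by simp
  have "det ?C = (\<Sum>i<Suc m. ?C $$ (i, m) * cofactor ?C i m)"
    by (rule laplace_expansion_column[OF C]) simp
  also have "\<dots> = (\<Sum>i<Suc m. if i = 0 then - v m * cofactor ?C 0 m else 0)"
    by (intro sum.cong) auto
  also have "\<dots> = - v m * cofactor ?C 0 m" by simp
  also have "mat_delete ?C 0 m = 1\<^sub>m m"
    by (rule eq_matI) (auto simp: mat_delete_def)
  then have "cofactor ?C 0 m = (-1) ^ m" by (simp add: cofactor_def)
  finally show ?thesis by simp
qed

locale inverse_series =
  fixes g u :: "int \<Rightarrow> 'a::comm_ring_1"
  assumes g_neg: "z < 0 \<Longrightarrow> g z = 0"
    and u_neg: "z < 0 \<Longrightarrow> u z = 0"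
    and g_0: "g 0 = 1"
    and convolution: "(\<Sum>j\<le>p. g (int p - int j) * u (int j)) = (if p = 0 then 1 else 0)"
begin

lemma u_0: "u 0 = 1"
  using convolution[of 0] g_0 by simp

lemma convolution_upto:
  assumes "z \<le> int N"
  shows "(\<Sum>j\<le>N. g (z - int j) * u (int j)) = (if z = 0 then 1 else 0)"
proof (cases "z < 0")
  case True
  then show ?thesis by (simp add: g_neg)
next
  case False
  then obtain p where z: "z = int p" by (metis nonneg_int_cases not_less)
  have "(\<Sum>j\<le>N. g (z - int j) * u (int j)) = (\<Sum>j\<le>p. g (z - int j) * u (int j))"
    by (rule sum.mono_neutral_right) (use assms z in \<open>auto simp: g_neg\<close>)
  then show ?thesis by (simp add: z convolution)
qed

lemma hessenberg_toeplitz_mult_entry: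
  assumes "\<rho> < m" "c < m"
  shows "(\<Sum>k<m. g (int k + 1 - int \<rho>) * u (int c - int k)) =
    (if \<rho> = c + 1 then 1 else 0) - (if \<rho> = 0 then u (int c + 1) else 0)"
proof -
  have "(\<Sum>k<m. g (int k + 1 - int \<rho>) * u (int c - int k)) =
      (\<Sum>k<Suc c. g (int k + 1 - int \<rho>) * u (int c - int k))"
    by (rule sum.mono_neutral_right) (use assms in \<open>auto simp: u_neg\<close>)
  also have "\<dots> = (\<Sum>j\<le>c. g (int c + 1 - int \<rho> - int j) * u (int j))"
    by (subst sum.nat_diff_reindex[symmetric])
      (auto simp: lessThan_Suc_atMost algebra_simps intro!: sum.cong)
  also have "\<dots> = (if \<rho> = c + 1 then 1 else 0) - (if \<rho> = 0 then u (int c + 1) else 0)"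
  proof (cases "\<rho> = 0")
    case True
    have "(\<Sum>j\<le>Suc c. g (int c + 1 - int j) * u (int j)) = 0"
      using convolution[of "Suc c"] by (simp add: add.commute)
    then show ?thesis using True by (simp add: g_0 add.commute eq_neg_iff_add_eq_0)
  next
    case False
    then show ?thesis using convolution_upto[of "int c + 1 - int \<rho>" c] by auto
  qed
  finally show ?thesis .
qed

theorem det_hessenberg_toeplitz:
  "det (mat m m (\<lambda>(\<rho>, c). g (int c + 1 - int \<rho>))) = (-1) ^ m * u (int m)"
proof (cases m)
  case 0
  then show ?thesis by (simp add: u_0)
next
  case (Suc m')
  define T where "T = mat m m (\<lambda>(\<rho>, c). g (int c + 1 - int \<rho>))"
  define U where "U = mat m m (\<lambda>(i, j). u (int j - int i))"
  have "T * U = mat m m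
      (\<lambda>(\<rho>, c). (if \<rho> = c + 1 then 1 else 0) - (if \<rho> = 0 then u (int c + 1) else 0))"
    by (rule eq_matI)
      (auto simp: T_def U_def scalar_prod_def hessenberg_toeplitz_mult_entry atLeast0LessThan)
  then have "det (T * U) = (-1) ^ m * u (int m)"
    using det_subdiagonal_first_row[of m' "\<lambda>c. u (int c + 1)"] Suc
    by (simp add: add.commute)
  moreover have "det U = 1"
  proof -
    have "upper_triangular U" by (auto simp: U_def u_neg)
    then show ?thesis
      by (subst det_upper_triangular[of _ m]) (auto simp: U_def prod_list_diag_prod u_0)
  qed
  ultimately show ?thesis
    using det_mult[of T m U] by (simp add: T_def U_def)
qed

end

lemma even_exp_coeff_0_left: "even_exp_coeff 0 (int p) = (if p = 0 then 1 else 0)"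
  by (auto simp: even_exp_coeff_def elim: evenE)

interpretation hermite_series: inverse_series "even_exp_coeff (-1/4)" "even_exp_coeff (1/4)"
  by unfold_locales
    (simp_all add: even_exp_coeff_neg even_exp_coeff_convolution even_exp_coeff_0_left)

lemma det_hermite_coeff_matrix:
  "det (mat m m (\<lambda>(\<rho>, c). b (a + 2 + c) (a + 1 + \<rho>))) =
    fact (a + 1 + m) / fact (a + 1) * ((-1) ^ m * even_exp_coeff (1/4) (int m))"
proof -
  define T where "T = mat m m (\<lambda>(\<rho>, c). even_exp_coeff (-1/4) (int c + 1 - int \<rho>))"
  have T: "T \<in> carrier_mat m m" by (simp add: T_def)
  have entry:
    "b (a + 2 + c) (a + 1 + \<rho>) = inverse (fact (a + 1 + \<rho>)) * T $$ (\<rho>, c) * fact (a + 2 + c)"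
    if "\<rho> < m" "c < m" for \<rho> c
  proof -
    have "int (a + 2 + c) - int (a + 1 + \<rho>) = int c + 1 - int \<rho>" by simp
    then show ?thesis using that unfolding b_def coeff_hermite T_def
      by (simp only: index_mat case_prod_conv divide_inverse mult.commute mult.left_commute)
  qed
  have "mat m m (\<lambda>(\<rho>, c). b (a + 2 + c) (a + 1 + \<rho>)) =
      mat m m (\<lambda>(\<rho>, c). inverse (fact (a + 1 + \<rho>)) * T $$ (\<rho>, c) * fact (a + 2 + c))"
    by (rule eq_matI) (simp_all only: index_mat dim_row_mat dim_col_mat case_prod_conv entry)
  then have "det (mat m m (\<lambda>(\<rho>, c). b (a + 2 + c) (a + 1 + \<rho>))) =
      (\<Prod>i<m. inverse (fact (a + 1 + i))) * det T * (\<Prod>i<m. fact (a + 2 + i))"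
    by (simp only: det_mat_scaled[OF T])
  also have "\<dots> = (\<Prod>i<m. fact (a + 2 + i) / fact (a + 1 + i)) * det T"
    by (simp only: divide_inverse prod.distrib mult_ac)
  also have "(\<Prod>i<m. fact (a + 2 + i) / fact (a + 1 + i) :: real) =
      fact (a + 1 + m) / fact (a + 1)"
    using prod_lessThan_telescope[of m "\<lambda>i. fact (a + 1 + i) :: real"] by simp
  finally show ?thesis
    using hermite_series.det_hessenberg_toeplitz[of m] by (simp add: T_def)
qed

lemma E_eq_even_exp_coeff:
  assumes "t < k" "k \<le> n"
  shows "E k n t =
    fact n / fact (n - k + t + 1) * ((-1) ^ (k - t - 1) * even_exp_coeff (1/4) (int (k - t - 1)))"
proof -
  have "E k n t = det (mat (k - t - 1) (k - t - 1)
      (\<lambda>(\<rho>, c). b ((n - k + t) + 2 + c) ((n - k + t) + 1 + \<rho>)))"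
    unfolding E_def by (simp add: ac_simps)
  also have "\<dots> =
      fact n / fact (n - k + t + 1) * ((-1) ^ (k - t - 1) * even_exp_coeff (1/4) (int (k - t - 1)))"
    unfolding det_hermite_coeff_matrix using assms by simp
  finally show ?thesis .
qed

theorem lemma6:
  fixes n k j r :: nat
  assumes "1 \<le> k" and "k \<le> n" and "1 \<le> r" and "j + r \<le> k"
  shows "E k n (j + r - 1) =
    (if odd (k - j - r) then 0
     else fact n / (fact (n - k + j + r) * fact ((k - j - r) div 2) * 2 ^ (k - j - r)))"
proof -
  define m where "m = k - j - r"
  have "n - k + (j + r - 1) + 1 = n - k + j + r" "k - (j + r - 1) - 1 = m"
    using assms by (simp_all add: m_def)
  then have "E k n (j + r - 1) =
      fact n / fact (n - k + j + r) * ((-1) ^ m * even_exp_coeff (1/4) (int m))"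
    using E_eq_even_exp_coeff[of "j + r - 1" k n] assms by simp
  then show ?thesis
    unfolding m_def[symmetric] by (simp add: even_exp_coeff_quarter)
qed

end
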